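(* Let $P \subseteq \mathbb{R}^d$ be a rational polytope (of any dimension). Then there exists an integer vector $w \in \mathbb{Z}^d$ such that the functions $s \mapsto L_{P + kw}(s)$, for integers $k \geq 0$, are pairwise distinct.
   Context: For a polytope $P \subseteq \mathbb{R}^d$ and real $s \ge 0$, the real Ehrhart function is $L_P(s) = \#(sP \cap \mathbb{Z}^d)$, where $sP = \{sx : x \in P\}$. A rational polytope is the convex hull of finitely many points of $\mathbb{Q}^d$. *)

theory Defs
  imports "HOL-Analysis.Analysis"
begin

definition integer_point :: "real^'n \<Rightarrow> bool" where
  "integer_point x \<longleftrightarrow> (\<forall>i. x $ i \<in> \<int>)"

definition rational_polytope :: "(real^'n) set \<Rightarrow> bool" where
  "rational_polytope P \<longleftrightarrow>
     (\<exists>V. finite V \<and> V \<noteq> {} \<and> (\<forall>v\<in>V. \<forall>i. v $ i \<in> \<rat>) \<and> P = convex hull V)"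

definition ehrhart :: "(real^'n) set \<Rightarrow> real \<Rightarrow> nat" where
  "ehrhart P s = card {x. integer_point x \<and> x \<in> (\<lambda>y. s *\<^sub>R y) ` P}"

end

theory Submission
  imports Defs
begin

text \<open>
  Pick a rational point v of P and write v = r u with u a primitive lattice vector and r \<ge> 0;
  take w = M u for M large compared with the size of P. At the scale s = 1/(r + k2 M) the
  dilate of P + k2 w contains the lattice point u = s (v + k2 w) and, being tiny, no other.
  A lattice point z in the same dilate of P + k1 w, k1 < k2, would make M (k2 z - k1 u)
  a short vector, so k2 z = k1 u, contradicting primitivity of u. This fails only when
  k1 = 0 and 0 \<in> P; then P alone keeps the lattice point 0 at every small scale, whereas a
  suitable small dilate of P + k2 w misses the lattice.
\<close>

definition lattice_points :: "(real^'n) set \<Rightarrow> (real^'n) set" where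
  "lattice_points S = {x. integer_point x \<and> x \<in> S}"

lemma ehrhart_eq_card_lattice_points:
  "ehrhart P s = card (lattice_points (scaleR s ` P))"
  by (simp add: ehrhart_def lattice_points_def)

lemma mem_scaled_translate_iff:
  "z \<in> scaleR s ` (\<lambda>x. x + a) ` P \<longleftrightarrow> (\<exists>p\<in>P. z = s *\<^sub>R (p + a))"
  by auto

lemma integer_point_component: "integer_point x \<Longrightarrow> x $ i \<in> \<int>"
  by (simp add: integer_point_def)

lemma integer_point_eq_if_close:
  assumes "integer_point x" "integer_point y" "\<And>i. \<bar>x $ i - y $ i\<bar> < 1"
  shows "x = y"
  unfolding vec_eq_iff using assms Ints_eq_abs_less1 integer_point_component by blast

definition primitive_vector :: "real^'n \<Rightarrow> bool" where
  "primitive_vector u \<longleftrightarrow>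
     integer_point u \<and> u \<noteq> 0 \<and> (\<forall>c. 0 < c \<and> c < 1 \<longrightarrow> \<not> integer_point (c *\<^sub>R u))"

lemma integer_point_sum_abs_nat:
  assumes "integer_point u"
  obtains n :: nat where "(\<Sum>i\<in>UNIV. \<bar>u $ i\<bar>) = real n"
proof -
  have "(\<Sum>i\<in>UNIV. \<bar>u $ i\<bar>) \<in> \<int>"
    using assms by (intro Ints_sum Ints_abs) (simp add: integer_point_component)
  then obtain z where z: "(\<Sum>i\<in>UNIV. \<bar>u $ i\<bar>) = of_int z" by (rule Ints_cases)
  moreover have "0 \<le> z"
    using z sum_nonneg[of UNIV "\<lambda>i. \<bar>u $ i\<bar>"] by simp
  ultimately show thesis using that[of "nat z"] by simp
qed

text \<open>Descent on the l1-norm, which is a natural number on lattice points.\<close>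
lemma primitive_multiple_of_integer_point:
  assumes "integer_point u0" "u0 \<noteq> 0"
  shows "\<exists>u c. primitive_vector u \<and> 0 < c \<and> u0 = c *\<^sub>R u"
proof -
  obtain n where "(\<Sum>i\<in>UNIV. \<bar>u0 $ i\<bar>) = real n"
    using integer_point_sum_abs_nat[OF assms(1)] by blast
  moreover have "\<exists>u c. primitive_vector u \<and> 0 < c \<and> u0 = c *\<^sub>R u"
    if "integer_point u0" "u0 \<noteq> 0" "(\<Sum>i\<in>UNIV. \<bar>u0 $ i\<bar>) = real n" for u0
    using that
  proof (induction n arbitrary: u0 rule: less_induct)
    case (less n)
    show ?case
    proof (cases "primitive_vector u0")
      case True
      then show ?thesis by (intro exI[of _ u0] exI[of _ 1]) simp
    next
      case False
      then obtain c where c: "0 < c" "c < 1" and int: "integer_point (c *\<^sub>R u0)"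
        using less.prems unfolding primitive_vector_def by blast
      obtain m where m: "(\<Sum>i\<in>UNIV. \<bar>(c *\<^sub>R u0) $ i\<bar>) = real m"
        using integer_point_sum_abs_nat[OF int] by blast
      have "real m = c * real n"
        using m c less.prems(3) by (simp add: abs_mult flip: sum_distrib_left)
      moreover have "0 < n"
      proof (rule ccontr)
        assume "\<not> 0 < n"
        then have "(\<Sum>i\<in>UNIV. \<bar>u0 $ i\<bar>) = 0" using less.prems(3) by simp
        then have "u0 = 0" by (simp add: sum_nonneg_eq_0_iff vec_eq_iff)
        with less.prems(2) show False ..
      qed
      ultimately have "real m < real n"
        using c mult_strict_right_mono[of c 1 "real n"] by simp
      then have "m < n" by simp
      then obtain u c' where u: "primitive_vector u" "0 < c'" "c *\<^sub>R u0 = c' *\<^sub>R u"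
        using less.IH[OF _ int _ m] less.prems(2) c by auto
      have "u0 = inverse c *\<^sub>R (c *\<^sub>R u0)" using c by simp
      then have "u0 = (c' / c) *\<^sub>R u" using u(3) by (simp add: divide_inverse_commute)
      then show ?thesis using u c by (intro exI[of _ u] exI[of _ "c' / c"]) auto
    qed
  qed
  ultimately show ?thesis using assms by blast
qed

lemma rational_vector_integer_multiple:
  fixes v :: "real^'n"
  assumes "\<forall>i. v $ i \<in> \<rat>"
  shows "\<exists>D::nat. 0 < D \<and> integer_point (real D *\<^sub>R v)"
proof -
  have "\<exists>d::nat. 0 < d \<and> real d * v $ i \<in> \<int>" for i
  proof -
    obtain a b where ab: "0 < b" "v $ i = of_int a / of_int b"
      using assms Rats_cases' by blast
    then have "real (nat b) * v $ i = of_int a" by simp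
    then show ?thesis using ab(1) by (intro exI[of _ "nat b"]) auto
  qed
  then obtain d where d: "\<And>i. 0 < d i" "\<And>i. real (d i) * v $ i \<in> \<int>" by metis
  define D where "D = (\<Prod>i\<in>UNIV. d i)"
  have "real D * v $ i \<in> \<int>" for i
  proof -
    have "D = d i * (\<Prod>j\<in>UNIV-{i}. d j)" unfolding D_def by (simp add: prod.remove)
    then have "real D * v $ i = real (\<Prod>j\<in>UNIV-{i}. d j) * (real (d i) * v $ i)" by simp
    then show ?thesis using d(2) by (metis Ints_mult Ints_of_nat)
  qed
  moreover have "0 < D" unfolding D_def using d(1) by (simp add: prod_pos)
  ultimately show ?thesis by (auto simp: integer_point_def)
qed

lemma primitive_vector_vec_1: "primitive_vector (vec 1)"
  unfolding primitive_vector_def integer_point_def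
  by (auto simp: vec_eq_iff elim!: Ints_cases)

lemma rational_vector_primitive_multiple:
  fixes v :: "real^'n"
  assumes "\<forall>i. v $ i \<in> \<rat>"
  shows "\<exists>u r. primitive_vector u \<and> 0 \<le> r \<and> v = r *\<^sub>R u"
proof (cases "v = 0")
  case True
  then show ?thesis using primitive_vector_vec_1 by (intro exI[of _ "vec 1"] exI[of _ 0]) simp
next
  case False
  obtain D :: nat where D: "0 < D" "integer_point (real D *\<^sub>R v)"
    using rational_vector_integer_multiple[OF assms] by blast
  then obtain u c where u: "primitive_vector u" "0 < c" "real D *\<^sub>R v = c *\<^sub>R u"
    using primitive_multiple_of_integer_point False by fastforce
  have "v = inverse (real D) *\<^sub>R (real D *\<^sub>R v)" using D(1) by simp
  then have "v = (c / real D) *\<^sub>R u" using u(3) by (simp add: divide_inverse_commute)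
  then show ?thesis using u D(1) by (intro exI[of _ u] exI[of _ "c / real D"]) simp
qed

lemma rational_polytope_rational_point_and_bound:
  assumes "rational_polytope P"
  obtains v B where "v \<in> P" "\<forall>i. v $ i \<in> \<rat>" "\<And>x i. x \<in> P \<Longrightarrow> \<bar>x $ i\<bar> \<le> B"
proof -
  obtain V where V: "finite V" "V \<noteq> {}" "\<forall>v\<in>V. \<forall>i. v $ i \<in> \<rat>" "P = convex hull V"
    using assms unfolding rational_polytope_def by blast
  then obtain v where v: "v \<in> V" by blast
  have "bounded P" using V(1,4) by (simp add: finite_imp_bounded_convex_hull)
  then obtain B where B: "\<And>x. x \<in> P \<Longrightarrow> norm x \<le> B" by (auto simp: bounded_iff)
  have "\<bar>x $ i\<bar> \<le> B" if "x \<in> P" for x i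
    using component_le_norm_cart[of x i] B[OF that] by linarith
  moreover have "v \<in> P" unfolding V(4) using v by (rule hull_inc)
  ultimately show thesis using that V(3) v by blast
qed

context
  fixes P :: "(real^'n) set" and B r M :: real and u :: "real^'n"
  assumes bound: "\<And>x i. x \<in> P \<Longrightarrow> \<bar>x $ i\<bar> \<le> B"
    and primitive: "primitive_vector u"
    and r_nonneg: "0 \<le> r"
    and rational_point: "r *\<^sub>R u \<in> P"
    and M_large: "2 * B + (1 + norm u) * r < M"
begin

lemma bound_nonneg: "0 \<le> B"
  by (meson abs_ge_zero bound order_trans rational_point)

lemma bound_less_M: "2 * B < M"
proof -
  have "0 \<le> (1 + norm u) * r" using r_nonneg by simp
  then show ?thesis using M_large by linarith
qed

lemma M_pos: "0 < M"
  using bound_less_M bound_nonneg by linarith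

lemma M_le_scale_denominator:
  fixes k :: nat
  assumes "1 \<le> k"
  shows "M \<le> r + k * M"
proof -
  have "1 * M \<le> k * M" using assms M_pos by (intro mult_right_mono) auto
  then show ?thesis using r_nonneg by simp
qed

lemma lattice_points_translate_far:
  fixes k :: nat
  assumes "1 \<le> k"
  shows "lattice_points (scaleR (1 / (r + k * M)) ` (\<lambda>x. x + real k *\<^sub>R (M *\<^sub>R u)) ` P) = {u}"
proof -
  define s where "s = 1 / (r + k * M)"
  have "M \<le> r + k * M" using M_le_scale_denominator[OF assms] .
  then have s_pos: "0 < s" and s_inv: "s * (r + k * M) = 1"
    using M_pos by (auto simp: s_def)
  have "s * (2 * B) < s * M" using s_pos bound_less_M by simp
  also have "\<dots> \<le> 1" using \<open>M \<le> r + k * M\<close> s_pos s_inv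
    by (metis mult_left_mono less_imp_le)
  finally have small: "s * (2 * B) < 1" .
  have "r *\<^sub>R u + real k *\<^sub>R (M *\<^sub>R u) = (r + k * M) *\<^sub>R u" by (simp add: scaleR_add_left)
  then have u_eq: "u = s *\<^sub>R (r *\<^sub>R u + real k *\<^sub>R (M *\<^sub>R u))" using s_inv by simp
  have u_int: "integer_point u" using primitive by (simp add: primitive_vector_def)
  have "z = u" if z: "integer_point z" "z = s *\<^sub>R (p + real k *\<^sub>R (M *\<^sub>R u))" and p: "p \<in> P"
    for z p
  proof (rule integer_point_eq_if_close[OF z(1) u_int])
    fix i
    have "z - u = s *\<^sub>R (p - r *\<^sub>R u)" using z(2) u_eq by (simp add: algebra_simps)
    then have "(z - u) $ i = (s *\<^sub>R (p - r *\<^sub>R u)) $ i" by simp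
    then have "\<bar>z $ i - u $ i\<bar> = s * \<bar>p $ i - r * u $ i\<bar>" using s_pos by (simp add: abs_mult)
    also have "\<dots> \<le> s * (2 * B)"
      using bound[OF p, of i] bound[OF rational_point, of i] s_pos by (intro mult_left_mono) auto
    finally show "\<bar>z $ i - u $ i\<bar> < 1" using small by linarith
  qed
  then show ?thesis using u_eq u_int rational_point
    unfolding s_def[symmetric] lattice_points_def mem_scaled_translate_iff by auto
qed

lemma lattice_point_near_translate:
  fixes k1 k2 :: nat
  assumes k: "k1 < k2" and z: "integer_point z" and p: "p \<in> P"
    and eq: "(r + k2 * M) *\<^sub>R z = p + real k1 *\<^sub>R (M *\<^sub>R u)"
  shows "real k2 *\<^sub>R z = real k1 *\<^sub>R u \<and> p = r *\<^sub>R z"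
proof -
  define d where "d = real k2 *\<^sub>R z - real k1 *\<^sub>R u"
  have d_eq: "p - r *\<^sub>R z = M *\<^sub>R d" using eq unfolding d_def by (simp add: algebra_simps)
  have M_le: "M \<le> r + k2 * M" using M_le_scale_denominator[of k2] k by simp
  have z_bound: "\<bar>z $ j\<bar> \<le> 1 + norm u" for j
  proof -
    have "(r + k2 * M) * \<bar>z $ j\<bar> = \<bar>((r + k2 * M) *\<^sub>R z) $ j\<bar>"
      using M_le M_pos by (simp add: abs_mult)
    also have "\<dots> = \<bar>p $ j + k1 * M * u $ j\<bar>" using eq by simp
    also have "\<dots> \<le> B + k1 * M * \<bar>u $ j\<bar>"
      using bound[OF p, of j] M_pos abs_triangle_ineq[of "p $ j" "k1 * M * u $ j"]
      by (simp add: abs_mult)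
    also have "\<dots> \<le> B + k2 * M * norm u"
      using k M_pos component_le_norm_cart[of u j] by (intro add_left_mono mult_mono) auto
    also have "\<dots> \<le> (r + k2 * M) * (1 + norm u)"
      using bound_less_M bound_nonneg M_le mult_nonneg_nonneg[OF r_nonneg norm_ge_zero[of u]]
      by (simp add: algebra_simps)
    finally show ?thesis using M_le M_pos by simp
  qed
  have "d = 0"
  proof (rule ccontr)
    assume "d \<noteq> 0"
    then obtain j where "d $ j \<noteq> 0" by (auto simp: vec_eq_iff)
    moreover have "d $ j \<in> \<int>"
      using z primitive by (simp add: d_def primitive_vector_def integer_point_component)
    ultimately have "1 \<le> \<bar>d $ j\<bar>" using Ints_nonzero_abs_ge1 by blast
    moreover have "p $ j - r * z $ j = M * d $ j" using arg_cong[OF d_eq, of "\<lambda>x. x $ j"] by simp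
    ultimately have "M \<le> \<bar>p $ j - r * z $ j\<bar>" using M_pos by (simp add: abs_mult)
    also have "\<dots> \<le> B + (1 + norm u) * r"
    proof -
      have "\<bar>r * z $ j\<bar> \<le> r * (1 + norm u)"
        using z_bound[of j] r_nonneg by (simp add: abs_mult mult_left_mono)
      then show ?thesis
        using bound[OF p, of j] abs_triangle_ineq4[of "p $ j" "r * z $ j"] by (simp add: mult.commute)
    qed
    finally show False using M_large bound_nonneg by linarith
  qed
  then show ?thesis using d_eq unfolding d_def by simp
qed

lemma lattice_points_translate_near:
  fixes k1 k2 :: nat
  assumes k: "k1 < k2" and zero: "k1 = 0 \<longrightarrow> 0 \<notin> P"
  shows "lattice_points (scaleR (1 / (r + k2 * M)) ` (\<lambda>x. x + real k1 *\<^sub>R (M *\<^sub>R u)) ` P) = {}"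
proof -
  have pos: "0 < r + k2 * M" using M_le_scale_denominator[of k2] k M_pos by simp
  have False if z: "integer_point z" "z = (1 / (r + k2 * M)) *\<^sub>R (p + real k1 *\<^sub>R (M *\<^sub>R u))"
    and p: "p \<in> P" for z p
  proof -
    have "(r + k2 * M) *\<^sub>R z = p + real k1 *\<^sub>R (M *\<^sub>R u)" using z(2) pos by simp
    then have zu: "real k2 *\<^sub>R z = real k1 *\<^sub>R u" and pz: "p = r *\<^sub>R z"
      using lattice_point_near_translate[OF k z(1) p] by auto
    show False
    proof (cases "k1 = 0")
      case True
      then show False using zu pz p k zero by simp
    next
      case False
      have "z = inverse (real k2) *\<^sub>R (real k2 *\<^sub>R z)" using k by simp
      then have "integer_point ((real k1 / real k2) *\<^sub>R u)"
        using zu z(1) by (simp add: divide_inverse_commute)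
      moreover have "0 < real k1 / real k2" "real k1 / real k2 < 1" using False k by auto
      ultimately show False using primitive unfolding primitive_vector_def by blast
    qed
  qed
  then show ?thesis unfolding lattice_points_def mem_scaled_translate_iff by blast
qed

lemma lattice_points_small_scale:
  fixes k :: nat
  assumes zero: "0 \<in> P" and k: "0 < k" and j: "u $ j \<noteq> 0"
  defines "s \<equiv> 1 / (2 * k * M * \<bar>u $ j\<bar>)"
  shows "lattice_points (scaleR s ` P) = {0}"
    and "lattice_points (scaleR s ` (\<lambda>x. x + real k *\<^sub>R (M *\<^sub>R u)) ` P) = {}"
proof -
  have "1 \<le> \<bar>u $ j\<bar>"
    using primitive j Ints_nonzero_abs_ge1 by (auto simp: primitive_vector_def integer_point_def)
  then have "1 * 1 \<le> k * \<bar>u $ j\<bar>" using k by (intro mult_mono) auto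
  then have "1 * M \<le> (k * \<bar>u $ j\<bar>) * M" using M_pos by (intro mult_right_mono) auto
  then have M_le: "M \<le> k * M * \<bar>u $ j\<bar>" by (simp add: algebra_simps)
  then have "0 < k * M * \<bar>u $ j\<bar>" using M_pos by linarith
  then have s_pos: "0 < s" and s_inv: "s * (k * M * \<bar>u $ j\<bar>) = 1 / 2"
    using M_pos k j unfolding s_def by (simp_all add: field_simps)
  have small: "\<bar>s * p $ i\<bar> < 1 / 2" if "p \<in> P" for p i
  proof -
    have "\<bar>s * p $ i\<bar> \<le> s * B" using bound[OF that] s_pos by (simp add: abs_mult mult_left_mono)
    also have "\<dots> < s * (k * M * \<bar>u $ j\<bar>)"
      using bound_less_M bound_nonneg M_le s_pos by (intro mult_strict_left_mono) linarith+
    finally show ?thesis using s_inv by simp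
  qed
  have "z = 0" if z: "integer_point z" "z = s *\<^sub>R p" and p: "p \<in> P" for z p
  proof -
    have "z $ i = 0" for i
      using Ints_nonzero_abs_less1[OF integer_point_component[OF z(1)]] small[OF p, of i] z(2)
      by simp
    then show ?thesis by (simp add: vec_eq_iff)
  qed
  then show "lattice_points (scaleR s ` P) = {0}"
    using zero by (auto simp: lattice_points_def integer_point_def)
  have False if z: "integer_point z" "z = s *\<^sub>R (p + real k *\<^sub>R (M *\<^sub>R u))" and p: "p \<in> P"
    for z p
  proof -
    have zj: "z $ j = s * p $ j + s * (k * M * u $ j)" using z(2) by (simp add: algebra_simps)
    have half: "\<bar>s * (k * M * u $ j)\<bar> = 1 / 2"
      using s_inv s_pos M_pos by (simp add: abs_mult)
    then have "\<bar>z $ j\<bar> < 1" using zj small[OF p, of j] by linarith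
    then have "z $ j = 0" using z(1) Ints_nonzero_abs_less1 integer_point_component by blast
    then show False using zj half small[OF p, of j] by linarith
  qed
  then show "lattice_points (scaleR s ` (\<lambda>x. x + real k *\<^sub>R (M *\<^sub>R u)) ` P) = {}"
    unfolding lattice_points_def mem_scaled_translate_iff by blast
qed

lemma ehrhart_translates_differ_less:
  fixes k1 k2 :: nat
  assumes k: "k1 < k2"
  shows "\<exists>s\<ge>0. ehrhart ((\<lambda>x. x + real k1 *\<^sub>R (M *\<^sub>R u)) ` P) s
              \<noteq> ehrhart ((\<lambda>x. x + real k2 *\<^sub>R (M *\<^sub>R u)) ` P) s"
proof (cases "k1 = 0 \<and> 0 \<in> P")
  case True
  obtain j where j: "u $ j \<noteq> 0" using primitive by (auto simp: primitive_vector_def vec_eq_iff)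
  define s where "s = 1 / (2 * k2 * M * \<bar>u $ j\<bar>)"
  have "0 \<le> s" using M_pos by (simp add: s_def)
  with lattice_points_small_scale[of k2 j] True k j show ?thesis
    by (intro exI[of _ s]) (simp add: ehrhart_eq_card_lattice_points s_def)
next
  case False
  have "1 \<le> k2" using k by simp
  moreover have "0 \<le> 1 / (r + k2 * M)"
    using M_le_scale_denominator[OF \<open>1 \<le> k2\<close>] M_pos by simp
  moreover have "k1 = 0 \<longrightarrow> 0 \<notin> P" using False by blast
  ultimately show ?thesis using lattice_points_translate_far[of k2] lattice_points_translate_near[OF k]
    by (intro exI[of _ "1 / (r + k2 * M)"]) (simp add: ehrhart_eq_card_lattice_points)
qed

lemma ehrhart_translates_differ:
  fixes k1 k2 :: nat
  assumes "k1 \<noteq> k2"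
  shows "\<exists>s\<ge>0. ehrhart ((\<lambda>x. x + real k1 *\<^sub>R (M *\<^sub>R u)) ` P) s
              \<noteq> ehrhart ((\<lambda>x. x + real k2 *\<^sub>R (M *\<^sub>R u)) ` P) s"
proof (cases k1 k2 rule: linorder_cases)
  case less
  then show ?thesis by (rule ehrhart_translates_differ_less)
next
  case greater
  then show ?thesis using ehrhart_translates_differ_less[OF greater] by (simp add: eq_commute)
qed (use assms in simp)

end

theorem theorem1:
  fixes P :: "(real^'n) set"
  assumes "rational_polytope P"
  shows "\<exists>w::real^'n. integer_point w \<and>
           (\<forall>k1 k2::nat. k1 \<noteq> k2 \<longrightarrow>
              (\<exists>s\<ge>0. ehrhart ((\<lambda>x. x + real k1 *\<^sub>R w) ` P) s
                     \<noteq> ehrhart ((\<lambda>x. x + real k2 *\<^sub>R w) ` P) s))"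
proof -
  obtain v B where v: "v \<in> P" "\<forall>i. v $ i \<in> \<rat>" and bound: "\<And>x i. x \<in> P \<Longrightarrow> \<bar>x $ i\<bar> \<le> B"
    using rational_polytope_rational_point_and_bound[OF assms] by blast
  obtain u r where u: "primitive_vector u" "0 \<le> r" "v = r *\<^sub>R u"
    using rational_vector_primitive_multiple[OF v(2)] by blast
  obtain M :: nat where M: "2 * B + (1 + norm u) * r < real M"
    using reals_Archimedean2 by blast
  have "integer_point (real M *\<^sub>R u)"
    using u(1) by (simp add: primitive_vector_def integer_point_def)
  moreover have "r *\<^sub>R u \<in> P" using v(1) u(3) by simp
  ultimately show ?thesis
    using ehrhart_translates_differ[OF bound u(1,2) _ M] by (intro exI[of _ "real M *\<^sub>R u"]) simp
qed

end
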